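(* For every $(z,\tau)\in\mathbb{C}\times\mathbb{H}^2$ the following four identities hold, where theta constants without arguments are evaluated at $(0,\tau)$: \begin{align*} &\theta^2\!\begin{bmatrix}1\\ \tfrac12\end{bmatrix}\theta^2\!\begin{bmatrix}1\\ 0\end{bmatrix}\!(z,\tau)+\theta^2\!\begin{bmatrix}1\\ 0\end{bmatrix}\theta\!\begin{bmatrix}1\\ \tfrac12\end{bmatrix}\!(z,\tau)\,\theta\!\begin{bmatrix}1\\ \tfrac32\end{bmatrix}\!(z,\tau)-\theta^2\!\begin{bmatrix}1\\ \tfrac12\end{bmatrix}\theta^2\!\begin{bmatrix}1\\ 1\end{bmatrix}\!(z,\tau)=0,\\ &\theta^2\!\begin{bmatrix}1\\ \tfrac23\end{bmatrix}\theta\!\begin{bmatrix}1\\ \tfrac13\end{bmatrix}\!(z,\tau)\,\theta\!\begin{bmatrix}1\\ \tfrac53\end{bmatrix}\!(z,\tau)-\theta^2\!\begin{bmatrix}1\\ \tfrac13\end{bmatrix}\theta\!\begin{bmatrix}1\\ \tfrac23\end{bmatrix}\!(z,\tau)\,\theta\!\begin{bmatrix}1\\ \tfrac43\end{bmatrix}\!(z,\tau)+\theta\!\begin{bmatrix}1\\ 0\end{bmatrix}\theta\!\begin{bmatrix}1\\ \tfrac23\end{bmatrix}\theta^2\!\begin{bmatrix}1\\ 1\end{bmatrix}\!(z,\tau)=0,\\ &\theta^2\!\begin{bmatrix}1\\ \tfrac34\end{bmatrix}\theta\!\begin{bmatrix}1\\ \tfrac14\end{bmatrix}\!(z,\tau)\,\theta\!\begin{bmatrix}1\\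 \tfrac74\end{bmatrix}\!(z,\tau)-\theta^2\!\begin{bmatrix}1\\ \tfrac14\end{bmatrix}\theta\!\begin{bmatrix}1\\ \tfrac34\end{bmatrix}\!(z,\tau)\,\theta\!\begin{bmatrix}1\\ \tfrac54\end{bmatrix}\!(z,\tau)+\theta\!\begin{bmatrix}1\\ 0\end{bmatrix}\theta\!\begin{bmatrix}1\\ \tfrac12\end{bmatrix}\theta^2\!\begin{bmatrix}1\\ 1\end{bmatrix}\!(z,\tau)=0,\\ &\theta^2\!\begin{bmatrix}1\\ \tfrac35\end{bmatrix}\theta\!\begin{bmatrix}1\\ \tfrac15\end{bmatrix}\!(z,\tau)\,\theta\!\begin{bmatrix}1\\ \tfrac95\end{bmatrix}\!(z,\tau)-\theta^2\!\begin{bmatrix}1\\ \tfrac15\end{bmatrix}\theta\!\begin{bmatrix}1\\ \tfrac35\end{bmatrix}\!(z,\tau)\,\theta\!\begin{bmatrix}1\\ \tfrac75\end{bmatrix}\!(z,\tau)+\theta\!\begin{bmatrix}1\\ \tfrac15\end{bmatrix}\theta\!\begin{bmatrix}1\\ \tfrac35\end{bmatrix}\theta^2\!\begin{bmatrix}1\\ 1\end{bmatrix}\!(z,\tau)=0. \end{align*}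
   Context: $\mathbb{H}^2=\{\tau\in\mathbb{C}:\operatorname{Im}\tau>0\}$. For $\epsilon,\epsilon'\in\mathbb{R}$, $\zeta\in\mathbb{C}$, $\tau\in\mathbb{H}^2$, the theta function with characteristics is $\theta\begin{bmatrix}\epsilon\\ \epsilon'\end{bmatrix}(\zeta,\tau)=\sum_{n\in\mathbb{Z}}\exp\!\Big(2\pi i\Big[\tfrac12\big(n+\tfrac{\epsilon}{2}\big)^2\tau+\big(n+\tfrac{\epsilon}{2}\big)\big(\zeta+\tfrac{\epsilon'}{2}\big)\Big]\Big)$. The theta constant $\theta\begin{bmatrix}\epsilon\\ \epsilon'\end{bmatrix}$ (no argument) means $\theta\begin{bmatrix}\epsilon\\ \epsilon'\end{bmatrix}(0,\tau)$, and $\theta^k[\cdot]$ denotes the $k$-th power. *)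

theory Defs
  imports "HOL-Analysis.Analysis"
begin

text \<open>The series converges absolutely for Im tau > 0; we use the unordered sum over the integers.\<close>
definition theta_char :: "real \<Rightarrow> real \<Rightarrow> complex \<Rightarrow> complex \<Rightarrow> complex" where
  "theta_char \<epsilon> \<epsilon>' \<zeta> \<tau> =
     (\<Sum>\<^sub>\<infinity>n::int. exp (2 * pi * \<i> *
        ((1/2) * (of_int n + of_real (\<epsilon>/2))\<^sup>2 * \<tau>
         + (of_int n + of_real (\<epsilon>/2)) * (\<zeta> + of_real (\<epsilon>'/2)))))"

definition theta_const :: "real \<Rightarrow> real \<Rightarrow> complex \<Rightarrow> complex" where
  "theta_const \<epsilon> \<epsilon>' \<tau> = theta_char \<epsilon> \<epsilon>' 0 \<tau>"

end

theory Submission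
  imports Defs
begin

text \<open>
  Grouping the terms of the double series for \<open>\<theta>[\<epsilon>;e](z,\<tau>) \<theta>[\<epsilon>;e'](w,\<tau>)\<close> by the parity of the sum of
  the two summation indices gives the product formula
  \<open>\<theta>[\<epsilon>;e](z,\<tau>) \<theta>[\<epsilon>;e'](w,\<tau>) =
     \<theta>[\<epsilon>;e+e'](z+w,2\<tau>) \<theta>[0;e-e'](z-w,2\<tau>) + \<theta>[\<epsilon>+1;e+e'](z+w,2\<tau>) \<theta>[1;e-e'](z-w,2\<tau>)\<close>.
  Hence each product \<open>\<theta>[1;a](z,\<tau>) \<theta>[1;2-a](z,\<tau>)\<close> is a combination of the two functions
  \<open>\<theta>[0;0](2z,2\<tau>)\<close> and \<open>\<theta>[1;0](2z,2\<tau>)\<close> with theta constants at \<open>2\<tau>\<close> as coefficients, and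
  eliminating these two functions from three such products gives a three-term relation for
  arbitrary \<open>a, b\<close>. The four identities are its instances \<open>(a,b) = (1/2,0), (1/3,2/3), (1/4,3/4),
  (1/5,3/5)\<close>; in each case the same product formula at \<open>z = w = 0\<close> identifies the coefficient
  of \<open>\<theta>[1;1](z,\<tau>)\<^sup>2\<close> with a product of theta constants at \<open>\<tau>\<close>.
\<close>

lemma summable_on_int_if_summable_nat:
  fixes f :: "int \<Rightarrow> real"
  assumes "summable (\<lambda>n. norm (f (int n)))" and "summable (\<lambda>n. norm (f (- int n)))"
  shows "f summable_on UNIV"
proof -
  have "f summable_on range int"
    using norm_summable_imp_summable_on[OF assms(1)] by (simp add: summable_on_reindex o_def)
  moreover have "f summable_on range (\<lambda>n. - int n)"
    using norm_summable_imp_summable_on[OF assms(2)] by (simp add: summable_on_reindex inj_def o_def)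
  ultimately have "f summable_on range int \<union> range (\<lambda>n. - int n)"
    by (rule summable_on_union)
  moreover have "UNIV = range int \<union> range (\<lambda>n. - int n)"
  proof (rule UNIV_eq_I)
    fix x :: int
    show "x \<in> range int \<union> range (\<lambda>n. - int n)"
    proof (cases "x \<ge> 0")
      case True
      then have "x = int (nat x)" by simp
      then show ?thesis by (intro UnI1 range_eqI)
    next
      case False
      then have "x = - int (nat (- x))" by simp
      then show ?thesis by (intro UnI2 range_eqI)
    qed
  qed
  ultimately show ?thesis
    by simp
qed

lemma exp_neg_abs_int_summable: "(\<lambda>n::int. exp (- \<bar>real_of_int n\<bar>)) summable_on UNIV"
proof (rule summable_on_int_if_summable_nat)
  have "summable (\<lambda>n. exp (- 1 :: real) ^ n)"
    by (simp add: summable_geometric)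
  then show "summable (\<lambda>n. norm (exp (- \<bar>real_of_int (int n)\<bar>)))"
    and "summable (\<lambda>n. norm (exp (- \<bar>real_of_int (- int n)\<bar>)))"
    by (simp_all add: exp_of_nat_mult[symmetric])
qed

lemma gaussian_int_abs_summable:
  fixes \<alpha> \<beta> \<gamma> :: complex
  assumes "Re \<alpha> < 0"
  shows "(\<lambda>n::int. norm (exp (\<alpha> * of_int n ^ 2 + \<beta> * of_int n + \<gamma>))) summable_on UNIV"
proof -
  define a where "a = - Re \<alpha>"
  define B where "B = \<bar>Re \<beta>\<bar> + 1"
  define K where "K = exp (Re \<gamma> + B\<^sup>2 / (4 * a))"
  have "a > 0"
    using assms by (simp add: a_def)
  have "norm (exp (\<alpha> * of_int n ^ 2 + \<beta> * of_int n + \<gamma>)) \<le> K * exp (- \<bar>real_of_int n\<bar>)" for n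
  proof -
    define t where "t = \<bar>real_of_int n\<bar>"
    have "0 \<le> a * (t - B / (2 * a))\<^sup>2"
      using \<open>a > 0\<close> by simp
    also have "\<dots> = a * t\<^sup>2 - B * t + B\<^sup>2 / (4 * a)"
      using \<open>a > 0\<close> by (simp add: power2_eq_square field_simps)
    finally have "- a * t\<^sup>2 + B * t \<le> B\<^sup>2 / (4 * a)"
      by simp
    moreover have "Re \<beta> * real_of_int n \<le> \<bar>Re \<beta>\<bar> * t"
      unfolding t_def by (metis abs_ge_self abs_mult)
    ultimately have "- a * real_of_int n ^ 2 + Re \<beta> * real_of_int n + Re \<gamma> \<le> Re \<gamma> + B\<^sup>2 / (4 * a) + - t"
      by (simp add: t_def B_def algebra_simps)
    moreover have "norm (exp (\<alpha> * of_int n ^ 2 + \<beta> * of_int n + \<gamma>))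
        = exp (- a * real_of_int n ^ 2 + Re \<beta> * real_of_int n + Re \<gamma>)"
      by (simp add: a_def power2_eq_square)
    ultimately show ?thesis
      unfolding K_def t_def exp_add[symmetric] by simp
  qed
  then show ?thesis
    by (intro summable_on_comparison_test[OF summable_on_cmult_right[OF exp_neg_abs_int_summable]]) auto
qed

lemma infsum_mult_infsum:
  fixes f :: "'a \<Rightarrow> 'c::{real_normed_field, banach}" and g :: "'b \<Rightarrow> 'c"
  assumes f: "(\<lambda>x. norm (f x)) summable_on A" and g: "(\<lambda>y. norm (g y)) summable_on B"
  shows "(\<lambda>(x, y). f x * g y) summable_on A \<times> B"
    and "(\<Sum>\<^sub>\<infinity>x\<in>A. f x) * (\<Sum>\<^sub>\<infinity>y\<in>B. g y) = (\<Sum>\<^sub>\<infinity>(x, y)\<in>A \<times> B. f x * g y)"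
proof -
  define SB where "SB = (\<Sum>\<^sub>\<infinity>y\<in>B. norm (g y))"
  have "(\<lambda>(x, y). norm (f x) * norm (g y)) summable_on A \<times> B"
  proof (rule summable_on_SigmaI[where g = "\<lambda>x. norm (f x) * SB"])
    show "((\<lambda>y. case (x, y) of (x, y) \<Rightarrow> norm (f x) * norm (g y)) has_sum norm (f x) * SB) B" for x
      using has_sum_cmult_right[OF has_sum_infsum[OF g], of "norm (f x)"] by (simp add: SB_def)
    show "(\<lambda>x. norm (f x) * SB) summable_on A"
      by (rule summable_on_cmult_left[OF f])
  qed auto
  then have "(\<lambda>z. norm ((\<lambda>(x, y). f x * g y) z)) summable_on A \<times> B"
    by (simp add: case_prod_unfold norm_mult)
  then show summable: "(\<lambda>(x, y). f x * g y) summable_on A \<times> B"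
    by (rule abs_summable_summable)
  have "(\<Sum>\<^sub>\<infinity>x\<in>A. f x) * (\<Sum>\<^sub>\<infinity>y\<in>B. g y) = (\<Sum>\<^sub>\<infinity>x\<in>A. f x * (\<Sum>\<^sub>\<infinity>y\<in>B. g y))"
    by (rule infsum_cmult_left'[symmetric])
  also have "\<dots> = (\<Sum>\<^sub>\<infinity>x\<in>A. \<Sum>\<^sub>\<infinity>y\<in>B. f x * g y)"
    by (simp only: infsum_cmult_right')
  also have "\<dots> = (\<Sum>\<^sub>\<infinity>(x, y)\<in>A \<times> B. f x * g y)"
    using infsum_Sigma_banach[OF summable] by (simp only: case_prod_conv)
  finally show "(\<Sum>\<^sub>\<infinity>x\<in>A. f x) * (\<Sum>\<^sub>\<infinity>y\<in>B. g y) = (\<Sum>\<^sub>\<infinity>(x, y)\<in>A \<times> B. f x * g y)" .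
qed

definition theta_term :: "real \<Rightarrow> real \<Rightarrow> complex \<Rightarrow> complex \<Rightarrow> int \<Rightarrow> complex" where
  "theta_term \<epsilon> \<epsilon>' \<zeta> \<tau> n = exp (2 * pi * \<i> *
     ((1/2) * (of_int n + of_real (\<epsilon>/2))\<^sup>2 * \<tau> + (of_int n + of_real (\<epsilon>/2)) * (\<zeta> + of_real (\<epsilon>'/2))))"

lemma theta_char_eq_infsum: "theta_char \<epsilon> \<epsilon>' \<zeta> \<tau> = (\<Sum>\<^sub>\<infinity>n. theta_term \<epsilon> \<epsilon>' \<zeta> \<tau> n)"
  by (simp add: theta_char_def theta_term_def)

lemma theta_term_abs_summable:
  assumes "Im \<tau> > 0"
  shows "(\<lambda>n. norm (theta_term \<epsilon> \<epsilon>' \<zeta> \<tau> n)) summable_on UNIV"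
proof -
  define \<zeta>' where "\<zeta>' = \<zeta> + of_real (\<epsilon>'/2)"
  have expand: "theta_term \<epsilon> \<epsilon>' \<zeta> \<tau> n = exp ((pi * \<i> * \<tau>) * of_int n ^ 2
          + (pi * \<i> * \<epsilon> * \<tau> + 2 * pi * \<i> * \<zeta>') * of_int n
          + (pi * \<i> * \<epsilon>\<^sup>2 * \<tau> / 4 + pi * \<i> * \<epsilon> * \<zeta>'))" for n
    unfolding theta_term_def \<zeta>'_def
    by (rule arg_cong[where f = exp]) (simp add: power2_eq_square field_simps)
  show ?thesis
    unfolding expand by (rule gaussian_int_abs_summable) (use assms in simp)
qed

lemma theta_char_add_two_first:
  "theta_char (\<epsilon> + 2) \<epsilon>' \<zeta> \<tau> = theta_char \<epsilon> \<epsilon>' \<zeta> \<tau>"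
  unfolding theta_char_eq_infsum
  by (rule infsum_reindex_bij_witness[where i = "\<lambda>n. n - 1" and j = "\<lambda>n. n + 1"])
    (simp_all add: theta_term_def add_divide_distrib algebra_simps)

lemma theta_char_add_two_second:
  "theta_char \<epsilon> (\<epsilon>' + 2) \<zeta> \<tau> = exp (pi * \<i> * \<epsilon>) * theta_char \<epsilon> \<epsilon>' \<zeta> \<tau>"
proof -
  have "theta_term \<epsilon> (\<epsilon>' + 2) \<zeta> \<tau> n = exp (pi * \<i> * \<epsilon>) * theta_term \<epsilon> \<epsilon>' \<zeta> \<tau> n" for n
  proof -
    have "theta_term \<epsilon> (\<epsilon>' + 2) \<zeta> \<tau> n
        = exp (\<i> * (of_int n * (of_real pi * 2)) + (pi * \<i> * \<epsilon> + 2 * pi * \<i> *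
            ((1/2) * (of_int n + of_real (\<epsilon>/2))\<^sup>2 * \<tau> + (of_int n + of_real (\<epsilon>/2)) * (\<zeta> + of_real (\<epsilon>'/2)))))"
      unfolding theta_term_def by (rule arg_cong[where f = exp]) (simp add: field_simps)
    then show ?thesis
      by (simp add: theta_term_def exp_add)
  qed
  then show ?thesis
    by (simp add: theta_char_eq_infsum infsum_cmult_right')
qed

lemma theta_char_uminus:
  "theta_char \<epsilon> \<epsilon>' (- \<zeta>) \<tau> = theta_char (- \<epsilon>) (- \<epsilon>') \<zeta> \<tau>"
  unfolding theta_char_eq_infsum
  by (rule infsum_reindex_bij_witness[where i = uminus and j = uminus])
    (simp_all add: theta_term_def power2_eq_square algebra_simps)

lemma infsum_int_pairs_parity_split:
  fixes T :: "int \<times> int \<Rightarrow> 'a::banach"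
  assumes "T summable_on UNIV"
  shows "(\<Sum>\<^sub>\<infinity>mn. T mn) = (\<Sum>\<^sub>\<infinity>(p, r). T (p + r, p - r)) + (\<Sum>\<^sub>\<infinity>(p, r). T (p + r + 1, p - r))"
proof -
  define E0 where "E0 = (\<lambda>(p, r). (p + r, p - r :: int))"
  define E1 where "E1 = (\<lambda>(p, r). (p + r + 1, p - r :: int))"
  have "inj E0" "inj E1"
    unfolding E0_def E1_def inj_def by auto
  have disjoint: "range E0 \<inter> range E1 = {}"
    unfolding E0_def E1_def by auto presburger
  have "(m, n) \<in> range E0 \<union> range E1" for m n :: int
  proof (cases "even (m + n)")
    case True
    then have "E0 ((m + n) div 2, (m - n) div 2) = (m, n)"
      unfolding E0_def by auto presburger+
    then show ?thesis by (metis UnI1 rangeI)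
  next
    case False
    then have "E1 ((m + n) div 2, (m - n) div 2) = (m, n)"
      unfolding E1_def by auto presburger+
    then show ?thesis by (metis UnI2 rangeI)
  qed
  then have cover: "range E0 \<union> range E1 = UNIV"
    by auto
  have "(\<Sum>\<^sub>\<infinity>mn. T mn) = (\<Sum>\<^sub>\<infinity>mn\<in>range E0. T mn) + (\<Sum>\<^sub>\<infinity>mn\<in>range E1. T mn)"
    using infsum_Un_disjoint[OF summable_on_subset_banach[OF assms] summable_on_subset_banach[OF assms] disjoint]
    by (simp add: cover)
  also have "\<dots> = (\<Sum>\<^sub>\<infinity>pr. T (E0 pr)) + (\<Sum>\<^sub>\<infinity>pr. T (E1 pr))"
    by (simp add: infsum_reindex \<open>inj E0\<close> \<open>inj E1\<close> o_def)
  finally show ?thesis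
    by (simp add: E0_def E1_def case_prod_unfold)
qed

lemma theta_term_mult_even:
  "theta_term \<epsilon> e z \<tau> (p + r) * theta_term \<epsilon> e' w \<tau> (p - r)
     = theta_term \<epsilon> (e + e') (z + w) (2 * \<tau>) p * theta_term 0 (e - e') (z - w) (2 * \<tau>) r"
  unfolding theta_term_def exp_add[symmetric]
  by (rule arg_cong[where f = exp]) (simp add: power2_eq_square field_simps)

lemma theta_term_mult_odd:
  "theta_term \<epsilon> e z \<tau> (p + r + 1) * theta_term \<epsilon> e' w \<tau> (p - r)
     = theta_term (\<epsilon> + 1) (e + e') (z + w) (2 * \<tau>) p * theta_term 1 (e - e') (z - w) (2 * \<tau>) r"
  unfolding theta_term_def exp_add[symmetric]
  by (rule arg_cong[where f = exp]) (simp add: power2_eq_square field_simps)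


lemma theta_char_mult_theta_char:
  assumes "Im \<tau> > 0"
  shows "theta_char \<epsilon> e z \<tau> * theta_char \<epsilon> e' w \<tau>
     = theta_char \<epsilon> (e + e') (z + w) (2 * \<tau>) * theta_char 0 (e - e') (z - w) (2 * \<tau>)
     + theta_char (\<epsilon> + 1) (e + e') (z + w) (2 * \<tau>) * theta_char 1 (e - e') (z - w) (2 * \<tau>)"
proof -
  have "Im (2 * \<tau>) > 0"
    using assms by simp
  note product = infsum_mult_infsum[OF theta_term_abs_summable theta_term_abs_summable, simplified]
  define T where "T = (\<lambda>(m, n). theta_term \<epsilon> e z \<tau> m * theta_term \<epsilon> e' w \<tau> n)"
  have "theta_char \<epsilon> e z \<tau> * theta_char \<epsilon> e' w \<tau> = (\<Sum>\<^sub>\<infinity>mn. T mn)"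
    unfolding theta_char_eq_infsum T_def by (rule product(2)[OF assms assms])
  also have "\<dots> = (\<Sum>\<^sub>\<infinity>(p, r). T (p + r, p - r)) + (\<Sum>\<^sub>\<infinity>(p, r). T (p + r + 1, p - r))"
    unfolding T_def by (rule infsum_int_pairs_parity_split[OF product(1)[OF assms assms]])
  also have "(\<Sum>\<^sub>\<infinity>(p, r). T (p + r, p - r))
      = (\<Sum>\<^sub>\<infinity>(p, r). theta_term \<epsilon> (e + e') (z + w) (2 * \<tau>) p * theta_term 0 (e - e') (z - w) (2 * \<tau>) r)"
    by (simp add: T_def theta_term_mult_even)
  also have "\<dots> = theta_char \<epsilon> (e + e') (z + w) (2 * \<tau>) * theta_char 0 (e - e') (z - w) (2 * \<tau>)"
    unfolding theta_char_eq_infsum by (rule product(2)[symmetric, OF \<open>Im (2 * \<tau>) > 0\<close> \<open>Im (2 * \<tau>) > 0\<close>])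
  also have "(\<Sum>\<^sub>\<infinity>(p, r). T (p + r + 1, p - r))
      = (\<Sum>\<^sub>\<infinity>(p, r). theta_term (\<epsilon> + 1) (e + e') (z + w) (2 * \<tau>) p * theta_term 1 (e - e') (z - w) (2 * \<tau>) r)"
    by (simp add: T_def theta_term_mult_odd)
  also have "\<dots> = theta_char (\<epsilon> + 1) (e + e') (z + w) (2 * \<tau>) * theta_char 1 (e - e') (z - w) (2 * \<tau>)"
    unfolding theta_char_eq_infsum by (rule product(2)[symmetric, OF \<open>Im (2 * \<tau>) > 0\<close> \<open>Im (2 * \<tau>) > 0\<close>])
  finally show ?thesis .
qed

lemma theta_char_two_first: "theta_char 2 \<epsilon>' \<zeta> \<tau> = theta_char 0 \<epsilon>' \<zeta> \<tau>"
  using theta_char_add_two_first[of 0] by simp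

lemma theta_char_0_add_two_second: "theta_char 0 (\<epsilon>' + 2) \<zeta> \<tau> = theta_char 0 \<epsilon>' \<zeta> \<tau>"
  using theta_char_add_two_second[of 0] by simp

lemma theta_char_1_add_two_second: "theta_char 1 (\<epsilon>' + 2) \<zeta> \<tau> = - theta_char 1 \<epsilon>' \<zeta> \<tau>"
  using theta_char_add_two_second[of 1] by simp

lemma theta_const_0_uminus: "theta_const 0 (- \<epsilon>') \<tau> = theta_const 0 \<epsilon>' \<tau>"
  using theta_char_uminus[of 0 "- \<epsilon>'" 0 \<tau>] by (simp add: theta_const_def)

lemma theta_const_1_uminus: "theta_const 1 (- \<epsilon>') \<tau> = theta_const 1 \<epsilon>' \<tau>"
  using theta_char_uminus[of 1 "- \<epsilon>'" 0 \<tau>] theta_char_add_two_first[of "- 1" \<epsilon>' 0 \<tau>]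
  by (simp add: theta_const_def)

lemma theta_const_0_reflect: "theta_const 0 (2 - \<epsilon>') \<tau> = theta_const 0 \<epsilon>' \<tau>"
  using theta_char_0_add_two_second[of "- \<epsilon>'" 0 \<tau>] theta_const_0_uminus[of \<epsilon>' \<tau>]
  by (simp add: theta_const_def)

lemma theta_const_1_reflect: "theta_const 1 (2 - \<epsilon>') \<tau> = - theta_const 1 \<epsilon>' \<tau>"
  using theta_char_1_add_two_second[of "- \<epsilon>'" 0 \<tau>] theta_const_1_uminus[of \<epsilon>' \<tau>]
  by (simp add: theta_const_def)

lemma theta_const_1_1: "theta_const 1 1 \<tau> = 0"
proof -
  have "theta_const 1 1 \<tau> = theta_const 1 (- 1) \<tau>"
    by (rule theta_const_1_uminus[symmetric])
  also have "\<dots> = - theta_const 1 1 \<tau>"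
    using theta_char_1_add_two_second[of "- 1" 0 \<tau>] by (simp add: theta_const_def)
  finally show ?thesis
    by simp
qed

lemma theta_const_1_mult_theta_const_1:
  assumes "Im \<tau> > 0"
  shows "theta_const 1 e \<tau> * theta_const 1 e' \<tau>
     = theta_const 1 (e + e') (2 * \<tau>) * theta_const 0 (e - e') (2 * \<tau>)
     + theta_const 0 (e + e') (2 * \<tau>) * theta_const 1 (e - e') (2 * \<tau>)"
  using theta_char_mult_theta_char[OF assms, of 1 e 0 e' 0]
  by (simp add: theta_const_def theta_char_two_first)

lemma theta_char_1_mult_reflected:
  assumes "Im \<tau> > 0"
  shows "theta_char 1 e z \<tau> * theta_char 1 (2 - e) z \<tau>
     = - (theta_const 1 (2 * e) (2 * \<tau>) * theta_char 0 0 (2 * z) (2 * \<tau>)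
          + theta_const 0 (2 * e) (2 * \<tau>) * theta_char 1 0 (2 * z) (2 * \<tau>))"
proof -
  have arith: "e + (2 - e) = 2" "e - (2 - e) = 2 * e - 2" "(1::real) + 1 = 2" "z + z = 2 * z" "z - z = 0"
    by simp_all
  have "theta_char 1 e z \<tau> * theta_char 1 (2 - e) z \<tau>
      = theta_char 1 2 (2 * z) (2 * \<tau>) * theta_char 0 (2 * e - 2) 0 (2 * \<tau>)
      + theta_char 2 2 (2 * z) (2 * \<tau>) * theta_char 1 (2 * e - 2) 0 (2 * \<tau>)"
    using theta_char_mult_theta_char[OF assms, of 1 e z "2 - e" z] unfolding arith .
  also have "\<dots> = - theta_char 1 0 (2 * z) (2 * \<tau>) * theta_const 0 (2 * e) (2 * \<tau>)
      - theta_char 0 0 (2 * z) (2 * \<tau>) * theta_const 1 (2 * e) (2 * \<tau>)"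
    using theta_char_0_add_two_second[of "2 * e - 2" 0 "2 * \<tau>"] theta_char_1_add_two_second[of "2 * e - 2" 0 "2 * \<tau>"]
      theta_char_0_add_two_second[of 0 "2 * z" "2 * \<tau>"] theta_char_1_add_two_second[of 0 "2 * z" "2 * \<tau>"]
    by (simp add: theta_const_def theta_char_two_first)
  finally show ?thesis
    by algebra
qed

lemma theta_const_1_square:
  assumes "Im \<tau> > 0"
  shows "(theta_const 1 e \<tau>)\<^sup>2
     = theta_const 1 (2 * e) (2 * \<tau>) * theta_const 0 0 (2 * \<tau>) + theta_const 0 (2 * e) (2 * \<tau>) * theta_const 1 0 (2 * \<tau>)"
proof -
  have "e + e = 2 * e" "e - e = 0"
    by simp_all
  then show ?thesis
    using theta_const_1_mult_theta_const_1[OF assms, of e e] by (simp only: power2_eq_square)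
qed

lemma theta_char_1_relation:
  assumes "Im \<tau> > 0"
  shows "(theta_const 1 b \<tau>)\<^sup>2 * theta_char 1 a z \<tau> * theta_char 1 (2 - a) z \<tau>
     - (theta_const 1 a \<tau>)\<^sup>2 * theta_char 1 b z \<tau> * theta_char 1 (2 - b) z \<tau>
     + (theta_const 0 (2 * b) (2 * \<tau>) * theta_const 1 (2 * a) (2 * \<tau>)
        - theta_const 0 (2 * a) (2 * \<tau>) * theta_const 1 (2 * b) (2 * \<tau>)) * (theta_char 1 1 z \<tau>)\<^sup>2 = 0"
proof -
  have "(theta_char 1 1 z \<tau>)\<^sup>2
      = theta_const 1 0 (2 * \<tau>) * theta_char 0 0 (2 * z) (2 * \<tau>) - theta_const 0 0 (2 * \<tau>) * theta_char 1 0 (2 * z) (2 * \<tau>)"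
    using theta_char_1_mult_reflected[OF assms, of 1 z]
      theta_char_0_add_two_second[of 0 0 "2 * \<tau>"] theta_char_1_add_two_second[of 0 0 "2 * \<tau>"]
    by (simp add: power2_eq_square theta_const_def)
  then show ?thesis
    using theta_const_1_square[OF assms, of a] theta_const_1_square[OF assms, of b]
      theta_char_1_mult_reflected[OF assms, of a z] theta_char_1_mult_reflected[OF assms, of b z]
    by algebra
qed

lemma theta_char_1_relation_complementary:
  assumes "Im \<tau> > 0"
  shows "(theta_const 1 (1 - a) \<tau>)\<^sup>2 * theta_char 1 a z \<tau> * theta_char 1 (2 - a) z \<tau>
     - (theta_const 1 a \<tau>)\<^sup>2 * theta_char 1 (1 - a) z \<tau> * theta_char 1 (1 + a) z \<tau>
     + theta_const 1 0 \<tau> * theta_const 1 (2 * a) \<tau> * (theta_char 1 1 z \<tau>)\<^sup>2 = 0"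
proof -
  have "2 - (1 - a) = 1 + a"
    by simp
  have "theta_const 1 0 \<tau> * theta_const 1 (2 * a) \<tau>
      = 2 * theta_const 0 (2 * a) (2 * \<tau>) * theta_const 1 (2 * a) (2 * \<tau>)"
    using theta_const_1_mult_theta_const_1[OF assms, of 0 "2 * a"]
    by (simp add: theta_const_0_uminus theta_const_1_uminus)
  also have "\<dots> = theta_const 0 (2 * (1 - a)) (2 * \<tau>) * theta_const 1 (2 * a) (2 * \<tau>)
      - theta_const 0 (2 * a) (2 * \<tau>) * theta_const 1 (2 * (1 - a)) (2 * \<tau>)"
    using theta_const_0_reflect[of "2 * a" "2 * \<tau>"] theta_const_1_reflect[of "2 * a" "2 * \<tau>"]
    by (simp add: right_diff_distrib)
  finally show ?thesis
    using \<open>2 - (1 - a) = 1 + a\<close> theta_char_1_relation[OF assms, of "1 - a" a z] by (simp only:)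
qed

lemma theta_char_1_relation_half:
  assumes "Im \<tau> > 0"
  shows "(theta_const 1 (1/2) \<tau>)\<^sup>2 * (theta_char 1 0 z \<tau>)\<^sup>2
     + (theta_const 1 0 \<tau>)\<^sup>2 * theta_char 1 (1/2) z \<tau> * theta_char 1 (3/2) z \<tau>
     - (theta_const 1 (1/2) \<tau>)\<^sup>2 * (theta_char 1 1 z \<tau>)\<^sup>2 = 0"
proof -
  have "(theta_const 1 (1/2) \<tau>)\<^sup>2 = theta_const 0 1 (2 * \<tau>) * theta_const 1 0 (2 * \<tau>)"
    using theta_const_1_square[OF assms, of "1/2"] by (simp add: theta_const_1_1)
  moreover have "theta_char 1 2 z \<tau> = - theta_char 1 0 z \<tau>"
    using theta_char_1_add_two_second[of 0 z \<tau>] by simp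
  ultimately show ?thesis
    using theta_char_1_relation[OF assms, of "1/2" 0 z] by (simp add: theta_const_1_1) algebra
qed

lemma theta_char_1_relation_fifths:
  assumes "Im \<tau> > 0"
  shows "(theta_const 1 (3/5) \<tau>)\<^sup>2 * theta_char 1 (1/5) z \<tau> * theta_char 1 (9/5) z \<tau>
     - (theta_const 1 (1/5) \<tau>)\<^sup>2 * theta_char 1 (3/5) z \<tau> * theta_char 1 (7/5) z \<tau>
     + theta_const 1 (1/5) \<tau> * theta_const 1 (3/5) \<tau> * (theta_char 1 1 z \<tau>)\<^sup>2 = 0"
proof -
  have "theta_const 1 (1/5) \<tau> * theta_const 1 (3/5) \<tau>
      = theta_const 1 (4/5) (2 * \<tau>) * theta_const 0 (2/5) (2 * \<tau>)
      + theta_const 0 (4/5) (2 * \<tau>) * theta_const 1 (2/5) (2 * \<tau>)"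
    using theta_const_1_mult_theta_const_1[OF assms, of "1/5" "3/5"]
      theta_const_0_uminus[of "2/5"] theta_const_1_uminus[of "2/5"] by simp
  moreover have "theta_const 0 (6/5) (2 * \<tau>) = theta_const 0 (4/5) (2 * \<tau>)"
    "theta_const 1 (6/5) (2 * \<tau>) = - theta_const 1 (4/5) (2 * \<tau>)"
    using theta_const_0_reflect[of "4/5"] theta_const_1_reflect[of "4/5"] by simp_all
  ultimately show ?thesis
    using theta_char_1_relation[OF assms, of "1/5" "3/5" z] by simp algebra
qed

theorem mainTheorem1:
  fixes z \<tau> :: complex
  assumes "Im \<tau> > 0"
  shows
   "(theta_const 1 (1/2) \<tau>)^2 * (theta_char 1 0 z \<tau>)^2
      + (theta_const 1 0 \<tau>)^2 * theta_char 1 (1/2) z \<tau> * theta_char 1 (3/2) z \<tau>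
      - (theta_const 1 (1/2) \<tau>)^2 * (theta_char 1 1 z \<tau>)^2 = 0 \<and>
   (theta_const 1 (2/3) \<tau>)^2 * theta_char 1 (1/3) z \<tau> * theta_char 1 (5/3) z \<tau>
      - (theta_const 1 (1/3) \<tau>)^2 * theta_char 1 (2/3) z \<tau> * theta_char 1 (4/3) z \<tau>
      + theta_const 1 0 \<tau> * theta_const 1 (2/3) \<tau> * (theta_char 1 1 z \<tau>)^2 = 0 \<and>
   (theta_const 1 (3/4) \<tau>)^2 * theta_char 1 (1/4) z \<tau> * theta_char 1 (7/4) z \<tau>
      - (theta_const 1 (1/4) \<tau>)^2 * theta_char 1 (3/4) z \<tau> * theta_char 1 (5/4) z \<tau>
      + theta_const 1 0 \<tau> * theta_const 1 (1/2) \<tau> * (theta_char 1 1 z \<tau>)^2 = 0 \<and>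
   (theta_const 1 (3/5) \<tau>)^2 * theta_char 1 (1/5) z \<tau> * theta_char 1 (9/5) z \<tau>
      - (theta_const 1 (1/5) \<tau>)^2 * theta_char 1 (3/5) z \<tau> * theta_char 1 (7/5) z \<tau>
      + theta_const 1 (1/5) \<tau> * theta_const 1 (3/5) \<tau> * (theta_char 1 1 z \<tau>)^2 = 0"
  using theta_char_1_relation_half[OF assms, of z]
    theta_char_1_relation_complementary[OF assms, of "1/3" z]
    theta_char_1_relation_complementary[OF assms, of "1/4" z]
    theta_char_1_relation_fifths[OF assms, of z]
  by simp

end
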